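(* Let $0\le r\le n$, let $f$ be an $r$-truncated subexceedant function on $[n-r]$, choose an admissible placement of block-ends, and let $A\in\mathcal{A}_{n+1,r+1}$ be the resulting assemblée produced by the insertion algorithm described below. Let $w_\alpha=\#\{i\in[n-r]: f(i)=i+r+1\}$ (the number of inserted elements given weight $\alpha^{-1}$) and $w_\beta=\#\{i\in[n-r]: f(i)=1\}$ (the number of inserted elements given weight $\beta^{-1}$). Then $|\mathrm{lrs}(\rho(A))|=w_\alpha$ and $|\mathrm{rls}(\rho(A))|=w_\beta$.
   Context: An assemblée of size $(m,s)$ is a collection of $s$ nonempty, pairwise disjoint, linearly ordered sets (blocks) whose union is $\{1,\dots,m\}$; the last element of a block is its block-end. Blocks are listed in the canonical order in which block-ends decrease from left to right, and the assemblée is identified with the word obtained by concatenating its blocks ("left/right in $A$" refers to this word). $\mathcal{A}_{m,s}$ is the set of assemblées of size $(m,s)$. For $A\in\mathcal{A}_{n+1,r+1}$ with block-ends $b_1>\dots>b_{r+1}$: $\mathrm{lrs}(A)$ is the set of elements $x>b_1$ of $A$ larger than every element $y>b_1$ to the right of $x$ in $A$; $\mathrm{rls}(A)$ is the set of elements $x<b_{r+1}$ of $A$ larger than every element $y<b_{r+1}$ to the left of $x$ in $A$. An $r$-truncated subexceedant function on $[n-r]=\{1,\dots,n-r\}$ is a function $f:[n-r]\to\mathbb{Z}_{>0}$ with $f(i)\le i+r+1$ for all $i$. Insertion algorithm. Start with $r+1$ "green" markers $g_1,\dots,g_{r+1}$ arranged vertically (in a linear "height" order, $g_1$ on top). For $i=1,\dots,n-r$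 insert a new element $x_i$, placed horizontally to the right of $x_{i-1}$, into the current height order (which contains the $r+1$ green markers and $x_1,\dots,x_{i-1}$, i.e. $i+r$ items) at position $f(i)$ counted from the bottom: $f(i)=1$ means below all current items, $f(i)=k$ means directly above the $(k-1)$-st item from the bottom (so $f(i)=i+r+1$ means above all current items). At the end, every one of the $n+1$ items receives as value its rank in the height order (from $1$ at the bottom to $n+1$ at the top); write $x_i$ also for the value of $x_i$ and $b_1>\dots>b_{r+1}$ for the values of $g_1,\dots,g_{r+1}$. An admissible placement of block-ends is a way of merging the sequence $x_1,\dots,x_{n-r}$ with the sequence $b_1,\dots,b_{r+1}$ (keeping both orders) such that $b_{r+1}$ is the last letter; there are $\binom{n}{r}$ of them. Cutting the merged word after each $b_i$ gives an assemblée $A\in\mathcal{A}_{n+1,r+1}$ with block-ends $b_1,\dots,b_{r+1}$. The inserted element $x_i$ is given weight $\beta^{-1}$ if $f(i)=1$, weight $\alpha^{-1}$ if $f(i)=i+r+1$, and weight $1$ otherwise. The map $\rho$. For $A\in\mathcal{A}_{n+1,r+1}$ with block-ends $b_1>\dots>b_{r+1}$, let $[a_1,\dots,a_u]$ be the elements of $A$ greater than $b_1$, listed in their order of appearance in $A$ from left to right, and $[c_1,\dots,c_w]$ the elements smaller than $b_{r+1}$, in their order of appearance. $\rho(A)$ is the word obtained from $A$ by replacing $a_i$ (in its position) by $a_{u-i+1}$ for each $i$, replacing $c_i$ by $b_{r+1}-c_i$ for each $i$, and leaving all other entries unchanged; it is again an assemblée in $\mathcal{A}_{n+1,r+1}$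 with the same block-ends. *)

theory Defs
  imports Main
begin

definition assemblee :: "nat \<Rightarrow> nat \<Rightarrow> nat list list \<Rightarrow> bool" where
  "assemblee m s A \<longleftrightarrow> length A = s \<and> (\<forall>B\<in>set A. B \<noteq> []) \<and>
     distinct (concat A) \<and> set (concat A) = {1..m} \<and>
     sorted_wrt (\<lambda>x y. x > y) (map last A)"

text \<open>b_1 = first (largest) block-end, b_{r+1} = last (smallest) block-end.\<close>
definition first_end :: "nat list list \<Rightarrow> nat" where
  "first_end A = last (hd A)"
definition last_end :: "nat list list \<Rightarrow> nat" where
  "last_end A = last (last A)"

definition lrs :: "nat list list \<Rightarrow> nat set" where
  "lrs A = (let w = concat A; b = first_end A in
     {w ! k | k. k < length w \<and> b < w ! k \<and>
        (\<forall>j. k < j \<and> j < length w \<and> b < w ! j \<longrightarrow> w ! j < w ! k)})"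

definition rls :: "nat list list \<Rightarrow> nat set" where
  "rls A = (let w = concat A; b = last_end A in
     {w ! k | k. k < length w \<and> w ! k < b \<and>
        (\<forall>j. j < k \<and> w ! j < b \<longrightarrow> w ! j < w ! k)})"

fun rho_word :: "nat list \<Rightarrow> nat \<Rightarrow> nat \<Rightarrow> nat list \<Rightarrow> nat list" where
  "rho_word ra b1 br [] = []"
| "rho_word ra b1 br (x # xs) =
     (if b1 < x then hd ra # rho_word (tl ra) b1 br xs
      else if x < br then (br - x) # rho_word ra b1 br xs
      else x # rho_word ra b1 br xs)"

fun split_lens :: "nat list \<Rightarrow> 'a list \<Rightarrow> 'a list list" where
  "split_lens [] w = []"
| "split_lens (l # ls) w = take l w # split_lens ls (drop l w)"

definition rho :: "nat list list \<Rightarrow> nat list list" where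
  "rho A = (let w = concat A; b1 = first_end A; br = last_end A in
     split_lens (map length A)
       (rho_word (rev (filter (\<lambda>x. b1 < x) w)) b1 br w))"

definition trunc_subexc :: "nat \<Rightarrow> nat \<Rightarrow> (nat \<Rightarrow> nat) \<Rightarrow> bool" where
  "trunc_subexc n r f \<longleftrightarrow> (\<forall>i\<in>{1..n-r}. 0 < f i \<and> f i \<le> i + r + 1)"

text \<open>Items: green markers G j (j = 1..r+1) and inserted elements X i.\<close>
datatype item = G nat | X nat

definition insert_at :: "nat \<Rightarrow> 'a \<Rightarrow> 'a list \<Rightarrow> 'a list" where
  "insert_at k x xs = take k xs @ x # drop k xs"

text \<open>Height order, listed from bottom to top. Initially g_{r+1},...,g_1
  (g_1 on top); x_i is inserted at position f(i) counted from the bottom.\<close>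
definition height_order :: "nat \<Rightarrow> nat \<Rightarrow> (nat \<Rightarrow> nat) \<Rightarrow> item list" where
  "height_order n r f =
     fold (\<lambda>i hs. insert_at (f i - 1) (X i) hs) [1..<n-r+1] (rev (map G [1..<r+2]))"

fun idx :: "'a list \<Rightarrow> 'a \<Rightarrow> nat" where
  "idx [] a = 0"
| "idx (x # xs) a = (if x = a then 0 else Suc (idx xs a))"

definition item_val :: "nat \<Rightarrow> nat \<Rightarrow> (nat \<Rightarrow> nat) \<Rightarrow> item \<Rightarrow> nat" where
  "item_val n r f it = idx (height_order n r f) it + 1"

definition is_G :: "item \<Rightarrow> bool" where
  "is_G it = (case it of G _ \<Rightarrow> True | X _ \<Rightarrow> False)"
definition is_X :: "item \<Rightarrow> bool" where
  "is_X it = (case it of G _ \<Rightarrow> False | X _ \<Rightarrow> True)"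

definition admissible :: "nat \<Rightarrow> nat \<Rightarrow> item list \<Rightarrow> bool" where
  "admissible n r w \<longleftrightarrow> filter is_X w = map X [1..<n-r+1] \<and>
     filter is_G w = map G [1..<r+2] \<and> w \<noteq> [] \<and> last w = G (r+1)"

fun cut_blocks :: "'a list \<Rightarrow> ('a \<Rightarrow> bool) \<Rightarrow> 'a list \<Rightarrow> 'a list list" where
  "cut_blocks acc P [] = (if acc = [] then [] else [acc])"
| "cut_blocks acc P (y # ys) =
     (if P y then (acc @ [y]) # cut_blocks [] P ys else cut_blocks (acc @ [y]) P ys)"

definition insertion_assemblee :: "nat \<Rightarrow> nat \<Rightarrow> (nat \<Rightarrow> nat) \<Rightarrow> item list \<Rightarrow> nat list list" where
  "insertion_assemblee n r f w = map (map (item_val n r f)) (cut_blocks [] is_G w)"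

end

theory Submission
  imports Defs
begin

text \<open>The map \<open>\<rho>\<close> fixes the block-ends, reverses the order of the entries larger than \<open>b\<^sub>1\<close>
  and replaces each entry \<open>c < b\<^bsub>r+1\<^esub>\<close> by \<open>b\<^bsub>r+1\<^esub> - c\<close>. Hence \<open>lrs(\<rho>(A))\<close> is the set of
  left-to-right maxima among the entries of \<open>A\<close> above \<open>b\<^sub>1\<close>, and \<open>rls(\<rho>(A))\<close> is in bijection
  with the left-to-right minima among the entries of \<open>A\<close> below \<open>b\<^bsub>r+1\<^esub>\<close>.
  In the insertion algorithm the relative height of two items never changes once both are
  present, and \<open>g\<^sub>1\<close> (resp. \<open>g\<^bsub>r+1\<^esub>\<close>) stays the highest (resp. lowest) green marker.
  So \<open>x\<^sub>i\<close> is a left-to-right maximum above \<open>b\<^sub>1\<close> iff at time \<open>i\<close> it was put above every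
  item present, i.e. \<open>f(i) = i + r + 1\<close>: otherwise the item directly above it is either a green
  marker (so \<open>x\<^sub>i\<close> ends below \<open>b\<^sub>1\<close>) or an earlier \<open>x\<^sub>l\<close> that beats it. Dually \<open>x\<^sub>i\<close> is a
  left-to-right minimum below \<open>b\<^bsub>r+1\<^esub>\<close> iff \<open>f(i) = 1\<close>.\<close>

section \<open>Records of a list\<close>

definition left_records :: "('a \<Rightarrow> 'a \<Rightarrow> bool) \<Rightarrow> ('a \<Rightarrow> bool) \<Rightarrow> 'a list \<Rightarrow> 'a set" where
  "left_records R P ys = {ys!k | k. k < length ys \<and> P (ys!k) \<and>
     (\<forall>j. j < k \<and> P (ys!j) \<longrightarrow> R (ys!j) (ys!k))}"

definition right_records :: "('a \<Rightarrow> 'a \<Rightarrow> bool) \<Rightarrow> ('a \<Rightarrow> bool) \<Rightarrow> 'a list \<Rightarrow> 'a set" where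
  "right_records R P ys = {ys!k | k. k < length ys \<and> P (ys!k) \<and>
     (\<forall>j. k < j \<and> j < length ys \<and> P (ys!j) \<longrightarrow> R (ys!j) (ys!k))}"

lemma mem_left_records: "x \<in> left_records R P ys \<longleftrightarrow>
    (\<exists>k<length ys. x = ys!k \<and> P (ys!k) \<and> (\<forall>j<k. P (ys!j) \<longrightarrow> R (ys!j) (ys!k)))"
  unfolding left_records_def by blast

lemma mem_right_records: "x \<in> right_records R P ys \<longleftrightarrow>
    (\<exists>k<length ys. x = ys!k \<and> P (ys!k) \<and> (\<forall>j<length ys. k < j \<longrightarrow> P (ys!j) \<longrightarrow> R (ys!j) (ys!k)))"
  unfolding right_records_def by blast

lemma left_records_Nil [simp]: "left_records R P [] = {}"
  by (simp add: left_records_def)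

lemma right_records_Nil [simp]: "right_records R P [] = {}"
  by (simp add: right_records_def)

lemma left_records_Cons: "left_records R P (y # ys) =
    (if P y then insert y {z \<in> left_records R P ys. R y z} else left_records R P ys)"
  by (rule set_eqI) (auto simp: mem_left_records Ex_less_Suc2 All_less_Suc2)

lemma right_records_Cons: "right_records R P (y # ys) =
    (if P y \<and> (\<forall>z\<in>set ys. P z \<longrightarrow> R z y) then insert y (right_records R P ys)
     else right_records R P ys)"
  by (rule set_eqI)
    (auto simp: mem_right_records Ex_less_Suc2 All_less_Suc2 in_set_conv_nth intro: nth_mem)

lemma left_records_snoc: "left_records R P (ys @ [y]) =
    (if P y \<and> (\<forall>z\<in>set ys. P z \<longrightarrow> R z y) then insert y (left_records R P ys)
     else left_records R P ys)"
proof -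
  have "x \<in> left_records R P (ys @ [y]) \<longleftrightarrow>
      (x = y \<and> P y \<and> (\<forall>j<length ys. P (ys!j) \<longrightarrow> R (ys!j) y)) \<or> x \<in> left_records R P ys" for x
    unfolding mem_left_records length_append_singleton Ex_less_Suc
    by (auto simp: nth_append)
  then show ?thesis
    by (auto simp: all_set_conv_all_nth)
qed

lemma right_records_snoc: "right_records R P (ys @ [y]) =
    (if P y then insert y {z \<in> right_records R P ys. R y z} else right_records R P ys)"
proof -
  have "x \<in> right_records R P (ys @ [y]) \<longleftrightarrow>
      (x = y \<and> P y) \<or> (x \<in> right_records R P ys \<and> (P y \<longrightarrow> R y x))" for x
    unfolding mem_right_records length_append_singleton Ex_less_Suc All_less_Suc
    by (auto simp: nth_append)
  then show ?thesis
    by auto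
qed

lemma right_records_rev: "right_records R P (rev ys) = left_records R P ys"
  by (induction ys) (auto simp: right_records_snoc left_records_Cons)

lemma left_records_subset: "left_records R P ys \<subseteq> set ys"
  by (auto simp: mem_left_records)

lemma left_records_filter: "left_records R P (filter P ys) = left_records R P ys"
  by (induction ys) (auto simp: left_records_Cons)

lemma right_records_filter: "right_records R P (filter P ys) = right_records R P ys"
  by (induction ys) (auto simp: right_records_Cons)

lemma left_records_map_filter:
  "(\<forall>y\<in>set ys. \<not> Q y \<longrightarrow> \<not> P (h y)) \<Longrightarrow>
    left_records R P (map h (filter Q ys)) = left_records R P (map h ys)"
  by (induction ys) (auto simp: left_records_Cons)

lemma left_records_map:
  "left_records R P (map h ys) = h ` left_records (\<lambda>a b. R (h a) (h b)) (\<lambda>a. P (h a)) ys"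
  by (induction ys) (auto simp: left_records_Cons)

lemma left_records_cong:
  "(\<And>x. x \<in> set ys \<Longrightarrow> P x = P' x) \<Longrightarrow>
   (\<And>x y. x \<in> set ys \<Longrightarrow> y \<in> set ys \<Longrightarrow> R x y = R' x y) \<Longrightarrow>
   left_records R P ys = left_records R' P' ys"
proof (induction ys)
  case (Cons a ys)
  have "left_records R P ys = left_records R' P' ys"
    using Cons by simp
  with Cons.prems left_records_subset[of R' P' ys] show ?case
    by (auto simp: left_records_Cons)
qed simp

lemma left_records_map_upt:
  "left_records R P (map g [1..<k+1]) =
    g ` {i\<in>{1..k}. P (g i) \<and> (\<forall>l. 1 \<le> l \<and> l < i \<longrightarrow> P (g l) \<longrightarrow> R (g l) (g i))}"
proof (induction k)
  case (Suc k)
  have "{i\<in>{1..Suc k}. P (g i) \<and> (\<forall>l. 1 \<le> l \<and> l < i \<longrightarrow> P (g l) \<longrightarrow> R (g l) (g i))}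
     = {i\<in>{1..k}. P (g i) \<and> (\<forall>l. 1 \<le> l \<and> l < i \<longrightarrow> P (g l) \<longrightarrow> R (g l) (g i))}
       \<union> (if P (g (Suc k)) \<and> (\<forall>l. 1 \<le> l \<and> l < Suc k \<longrightarrow> P (g l) \<longrightarrow> R (g l) (g (Suc k)))
          then {Suc k} else {})"
    by (auto simp: le_Suc_eq)
  moreover have "(\<forall>z\<in>g ` {1..k}. P z \<longrightarrow> R z (g (Suc k))) =
      (\<forall>l. 1 \<le> l \<and> l < Suc k \<longrightarrow> P (g l) \<longrightarrow> R (g l) (g (Suc k)))"
    by auto
  ultimately show ?case
    using Suc by (auto simp: left_records_snoc image_iff)
qed simp

section \<open>The map \<open>\<rho>\<close>\<close>

lemma concat_split_lens: "length xs = sum_list ls \<Longrightarrow> concat (split_lens ls xs) = xs"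
  by (induction ls arbitrary: xs) auto

lemma map_length_split_lens: "length xs = sum_list ls \<Longrightarrow> map length (split_lens ls xs) = ls"
  by (induction ls arbitrary: xs) auto

lemma length_rho_word: "length (rho_word ra b1 br xs) = length xs"
  by (induction xs arbitrary: ra) auto

lemma filter_big_rho_word:
  "length ra = length (filter (\<lambda>x. b1 < x) xs) \<Longrightarrow> \<forall>z\<in>set ra. b1 < z \<Longrightarrow> br \<le> b1 \<Longrightarrow>
    filter (\<lambda>x. b1 < x) (rho_word ra b1 br xs) = ra"
  by (induction xs arbitrary: ra) (auto simp: length_Suc_conv)

lemma filter_small_rho_word:
  "length ra = length (filter (\<lambda>x. b1 < x) xs) \<Longrightarrow> \<forall>z\<in>set ra. b1 < z \<Longrightarrow> br \<le> b1 \<Longrightarrow>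
    0 \<notin> set xs \<Longrightarrow>
    filter (\<lambda>x. x < br) (rho_word ra b1 br xs) = map (\<lambda>x. br - x) (filter (\<lambda>x. x < br) xs)"
  by (induction xs arbitrary: ra) (auto simp: length_Suc_conv)

lemma nth_rho_word_fixed:
  "k < length xs \<Longrightarrow> br \<le> xs ! k \<Longrightarrow> xs ! k \<le> b1 \<Longrightarrow> rho_word ra b1 br xs ! k = xs ! k"
  by (induction xs arbitrary: ra k) (auto simp: nth_Cons split: nat.splits)

lemma last_hd_eq_nth_concat:
  "Bs \<noteq> [] \<Longrightarrow> hd Bs \<noteq> [] \<Longrightarrow> last (hd Bs) = concat Bs ! (length (hd Bs) - 1)"
  by (cases Bs) (auto simp: nth_append last_conv_nth)

lemma last_last_eq_last_concat: "Bs \<noteq> [] \<Longrightarrow> last Bs \<noteq> [] \<Longrightarrow> last (last Bs) = last (concat Bs)"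
  by (induction Bs) (auto simp: last_append)

lemma concat_rho: "concat (rho A) =
    rho_word (rev (filter (\<lambda>x. first_end A < x) (concat A))) (first_end A) (last_end A) (concat A)"
  unfolding rho_def Let_def by (rule concat_split_lens) (simp add: length_rho_word length_concat)

lemma map_length_rho: "map length (rho A) = map length A"
  unfolding rho_def Let_def
  by (rule map_length_split_lens) (simp add: length_rho_word length_concat)

context
  fixes A :: "nat list list"
  assumes blocks_ne: "A \<noteq> []" "\<forall>B\<in>set A. B \<noteq> []"
    and ends_ordered: "last_end A \<le> first_end A"
begin

lemma hd_last_blocks_ne: "hd A \<noteq> []" "last A \<noteq> []"
  using blocks_ne by simp_all

lemma rho_blocks_ne: "rho A \<noteq> []" "hd (rho A) \<noteq> []" "last (rho A) \<noteq> []"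
proof -
  show ne: "rho A \<noteq> []"
    using map_length_rho[of A] blocks_ne by auto
  have "length (hd (rho A)) = length (hd A)" "length (last (rho A)) = length (last A)"
    using arg_cong[OF map_length_rho, of hd A] arg_cong[OF map_length_rho, of last A] ne blocks_ne
    by (simp_all add: hd_map last_map)
  then show "hd (rho A) \<noteq> []" "last (rho A) \<noteq> []"
    using blocks_ne by auto
qed

lemma length_concat_rho: "length (concat (rho A)) = length (concat A)"
  by (simp add: concat_rho length_rho_word)

lemma first_end_rho: "first_end (rho A) = first_end A"
proof -
  let ?k = "length (hd A) - 1"
  have len: "length (hd (rho A)) = length (hd A)"
    using arg_cong[OF map_length_rho, of hd A] rho_blocks_ne blocks_ne by (simp add: hd_map)
  have "0 < length (hd A)" "length (hd A) \<le> length (concat A)"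
    using blocks_ne by (cases A; simp)+
  then have k: "?k < length (concat A)"
    by linarith
  have end_k: "concat A ! ?k = first_end A"
    unfolding first_end_def by (simp add: last_hd_eq_nth_concat[OF blocks_ne(1) hd_last_blocks_ne(1)])
  have "first_end (rho A) = concat (rho A) ! ?k"
    unfolding first_end_def using last_hd_eq_nth_concat[OF rho_blocks_ne(1,2)] len by simp
  also have "\<dots> = concat A ! ?k"
    unfolding concat_rho using k end_k ends_ordered by (simp add: nth_rho_word_fixed)
  finally show ?thesis
    using end_k by simp
qed

lemma last_end_rho: "last_end (rho A) = last_end A"
proof -
  let ?k = "length (concat A) - 1"
  have ne: "concat A \<noteq> []"
    using blocks_ne by (cases A) auto
  have end_k: "concat A ! ?k = last_end A"
    unfolding last_end_def
    using last_last_eq_last_concat[OF blocks_ne(1) hd_last_blocks_ne(2)] ne by (simp add: last_conv_nth)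
  have "last_end (rho A) = concat (rho A) ! ?k"
    unfolding last_end_def using last_last_eq_last_concat[OF rho_blocks_ne(1,3)] ne length_concat_rho
    by (metis last_conv_nth length_0_conv)
  also have "\<dots> = concat A ! ?k"
    unfolding concat_rho using ne end_k ends_ordered by (simp add: nth_rho_word_fixed)
  finally show ?thesis
    using end_k by simp
qed

lemma lrs_rho: "lrs (rho A) = left_records (<) (\<lambda>x. first_end A < x) (concat A)"
proof -
  let ?P = "\<lambda>x. first_end A < x"
  let ?ra = "rev (filter ?P (concat A))"
  have "lrs (rho A) = right_records (<) ?P (concat (rho A))"
    unfolding lrs_def right_records_def Let_def first_end_rho ..
  also have "\<dots> = right_records (<) ?P (filter ?P (concat (rho A)))"
    by (simp add: right_records_filter)
  also have "filter ?P (concat (rho A)) = ?ra"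
    unfolding concat_rho by (rule filter_big_rho_word) (auto simp: ends_ordered)
  finally show ?thesis
    by (simp add: right_records_rev left_records_filter)
qed

lemma rls_rho:
  assumes pos: "0 \<notin> set (concat A)"
  shows "rls (rho A) = (\<lambda>x. last_end A - x) ` left_records (>) (\<lambda>x. x < last_end A) (concat A)"
proof -
  let ?b = "last_end A"
  let ?P = "\<lambda>x. x < ?b"
  let ?h = "\<lambda>x. ?b - x"
  have "rls (rho A) = left_records (<) ?P (concat (rho A))"
    unfolding rls_def left_records_def Let_def last_end_rho ..
  also have "\<dots> = left_records (<) ?P (filter ?P (concat (rho A)))"
    by (simp add: left_records_filter)
  also have "filter ?P (concat (rho A)) = map ?h (filter ?P (concat A))"
    unfolding concat_rho by (rule filter_small_rho_word[OF _ _ ends_ordered pos]) auto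
  also have "left_records (<) ?P (map ?h (filter ?P (concat A))) =
      ?h ` left_records (\<lambda>a b. ?h a < ?h b) (\<lambda>a. ?h a < ?b) (filter ?P (concat A))"
    by (rule left_records_map)
  also have "left_records (\<lambda>a b. ?h a < ?h b) (\<lambda>a. ?h a < ?b) (filter ?P (concat A)) =
      left_records (>) ?P (filter ?P (concat A))"
  proof (rule left_records_cong)
    have "0 < x \<and> x < ?b" if "x \<in> set (filter ?P (concat A))" for x
      using that pos by (metis (mono_tags) gr0I mem_Collect_eq set_filter)
    then show "(?h x < ?b) = (x < ?b)" "(?h x < ?h y) = (x > y)"
      if "x \<in> set (filter ?P (concat A))" "y \<in> set (filter ?P (concat A))" for x y
      using that by fastforce+
  qed
  finally show ?thesis
    by (simp add: left_records_filter)
qed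

end

lemma idx_append: "idx (xs @ ys) a = (if a \<in> set xs then idx xs a else length xs + idx ys a)"
  by (induction xs) auto

lemma idx_less_length: "a \<in> set xs \<Longrightarrow> idx xs a < length xs"
  by (induction xs) auto

lemma nth_idx: "a \<in> set xs \<Longrightarrow> xs ! idx xs a = a"
  by (induction xs) auto

lemma idx_nth: "distinct xs \<Longrightarrow> k < length xs \<Longrightarrow> idx xs (xs ! k) = k"
  by (induction xs arbitrary: k) (auto simp: nth_Cons split: nat.splits)

lemma idx_inj: "a \<in> set xs \<Longrightarrow> b \<in> set xs \<Longrightarrow> idx xs a = idx xs b \<Longrightarrow> a = b"
  by (metis nth_idx)

lemma set_insert_at [simp]: "set (insert_at p x xs) = insert x (set xs)"
  unfolding insert_at_def by (metis Un_insert_right append_take_drop_id list.simps(15) set_append)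

lemma length_insert_at [simp]: "length (insert_at p x xs) = Suc (length xs)"
  unfolding insert_at_def by simp

lemma distinct_insert_at: "distinct xs \<Longrightarrow> x \<notin> set xs \<Longrightarrow> distinct (insert_at p x xs)"
  using distinct_append[of "take p xs" "drop p xs"] unfolding insert_at_def
  by (auto dest: in_set_takeD in_set_dropD)

lemma idx_insert_at_new: "x \<notin> set xs \<Longrightarrow> p \<le> length xs \<Longrightarrow> idx (insert_at p x xs) x = p"
  unfolding insert_at_def by (auto simp: idx_append dest: in_set_takeD)

lemma idx_insert_at_old:
  assumes x: "x \<notin> set xs" and p: "p \<le> length xs" and a: "a \<in> set xs"
  shows "idx (insert_at p x xs) a = (if idx xs a < p then idx xs a else Suc (idx xs a))"
proof -
  have len: "length (take p xs) = p"
    using p by simp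
  have "idx xs a = (if a \<in> set (take p xs) then idx (take p xs) a else p + idx (drop p xs) a)"
    using idx_append[of "take p xs" "drop p xs" a] len by simp
  moreover have "idx (insert_at p x xs) a =
      (if a \<in> set (take p xs) then idx (take p xs) a else p + Suc (idx (drop p xs) a))"
    unfolding insert_at_def using idx_append[of "take p xs" "x # drop p xs" a] len x a by auto
  moreover have "a \<in> set (take p xs) \<Longrightarrow> idx (take p xs) a < p"
    using idx_less_length len by metis
  ultimately show ?thesis
    by auto
qed

section \<open>The stages of the insertion algorithm\<close>

definition height_stage :: "nat \<Rightarrow> (nat \<Rightarrow> nat) \<Rightarrow> nat \<Rightarrow> item list" where
  "height_stage r f k =
     fold (\<lambda>i hs. insert_at (f i - 1) (X i) hs) [1..<k+1] (rev (map G [1..<r+2]))"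

lemma height_stage_0: "height_stage r f 0 = rev (map G [1..<r+2])"
  by (simp add: height_stage_def)

lemma height_stage_Suc:
  "height_stage r f (Suc k) = insert_at (f (Suc k) - 1) (X (Suc k)) (height_stage r f k)"
  by (simp add: height_stage_def)

lemma height_order_eq_height_stage: "height_order n r f = height_stage r f (n - r)"
  by (simp add: height_stage_def height_order_def)

lemma height_stage_items:
  "\<forall>i\<in>{1..k}. f i \<le> i + r + 1 \<Longrightarrow>
    distinct (height_stage r f k) \<and> set (height_stage r f k) = G ` {1..r+1} \<union> X ` {1..k} \<and>
    length (height_stage r f k) = r + 1 + k"
proof (induction k)
  case 0
  have "{1..<r+2} = {1..r+1}"
    by auto
  then show ?case
    by (simp add: height_stage_0 distinct_map inj_on_def del: upt_Suc)
next
  case (Suc k)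
  then have IH: "distinct (height_stage r f k)"
    "set (height_stage r f k) = G ` {1..r+1} \<union> X ` {1..k}" "length (height_stage r f k) = r + 1 + k"
    by auto
  moreover have "X (Suc k) \<notin> set (height_stage r f k)"
    using IH(2) by auto
  moreover have "{1..Suc k} = insert (Suc k) {1..k}"
    by auto
  ultimately show ?case
    by (simp add: height_stage_Suc distinct_insert_at)
qed

lemma idx_height_stage_Suc:
  assumes "\<forall>i\<in>{1..Suc k}. f i \<le> i + r + 1" and a: "a \<in> set (height_stage r f k)"
  shows "idx (height_stage r f (Suc k)) a =
    (if idx (height_stage r f k) a < f (Suc k) - 1 then idx (height_stage r f k) a
     else Suc (idx (height_stage r f k) a))"
proof -
  have "\<forall>i\<in>{1..k}. f i \<le> i + r + 1" "f (Suc k) \<le> Suc k + r + 1"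
    using assms(1) bspec[OF assms(1), of "Suc k"] by auto
  with height_stage_items[of k f r] show ?thesis
    unfolding height_stage_Suc by (intro idx_insert_at_old a) auto
qed

lemma height_stage_order_stable:
  assumes f: "\<forall>i\<in>{1..k'}. f i \<le> i + r + 1" and "k \<le> k'"
    and a: "a \<in> set (height_stage r f k)" and b: "b \<in> set (height_stage r f k)"
  shows "idx (height_stage r f k') a < idx (height_stage r f k') b \<longleftrightarrow>
    idx (height_stage r f k) a < idx (height_stage r f k) b"
  using \<open>k \<le> k'\<close> f
proof (induction k' rule: dec_induct)
  case (step k2)
  have f2: "\<forall>i\<in>{1..k2}. f i \<le> i + r + 1"
    using step.prems by auto
  have "set (height_stage r f k) \<subseteq> set (height_stage r f k2)"
    using height_stage_items[OF f2] height_stage_items[of k f r] f2 step.hyps by auto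
  then have "a \<in> set (height_stage r f k2)" "b \<in> set (height_stage r f k2)"
    using a b by auto
  then have "idx (height_stage r f (Suc k2)) a < idx (height_stage r f (Suc k2)) b \<longleftrightarrow>
      idx (height_stage r f k2) a < idx (height_stage r f k2) b"
    by (simp add: idx_height_stage_Suc[OF step.prems])
  then show ?case
    using step.IH[OF f2] by simp
qed simp

lemma idx_height_stage_0_G: "j \<in> {1..r+1} \<Longrightarrow> idx (height_stage r f 0) (G j) = r + 1 - j"
proof -
  assume j: "j \<in> {1..r+1}"
  have "height_stage r f 0 ! (r + 1 - j) = G j" "r + 1 - j < length (height_stage r f 0)"
    using j by (auto simp: height_stage_0 rev_nth nth_map simp del: upt_Suc)
  moreover have "distinct (height_stage r f 0)"
    using height_stage_items[of 0 f r] by simp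
  ultimately show ?thesis
    using idx_nth by metis
qed

lemma green_heights_bounded:
  assumes F: "\<forall>i\<in>{1..m}. f i \<le> i + r + 1" and j: "j \<in> {1..r+1}"
  shows "idx (height_stage r f m) (G j) \<le> idx (height_stage r f m) (G 1)"
    "idx (height_stage r f m) (G (r+1)) \<le> idx (height_stage r f m) (G j)"
proof -
  have mem: "G 1 \<in> set (height_stage r f 0)" "G j \<in> set (height_stage r f 0)"
    "G (r+1) \<in> set (height_stage r f 0)"
    using height_stage_items[of 0 f r] j by auto
  have "\<not> idx (height_stage r f 0) (G 1) < idx (height_stage r f 0) (G j)"
    "\<not> idx (height_stage r f 0) (G j) < idx (height_stage r f 0) (G (r+1))"
    using idx_height_stage_0_G[of _ r f] j by auto
  then have "\<not> idx (height_stage r f m) (G 1) < idx (height_stage r f m) (G j)"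
    "\<not> idx (height_stage r f m) (G j) < idx (height_stage r f m) (G (r+1))"
    using height_stage_order_stable[OF F le0] mem by simp_all
  then show "idx (height_stage r f m) (G j) \<le> idx (height_stage r f m) (G 1)"
    "idx (height_stage r f m) (G (r+1)) \<le> idx (height_stage r f m) (G j)"
    by simp_all
qed

lemma insertion_step:
  assumes F: "\<forall>i\<in>{1..m}. 0 < f i \<and> f i \<le> i + r + 1" and i: "i \<in> {1..m}"
  defines "K \<equiv> height_stage r f (i - 1)" and "H \<equiv> height_stage r f m"
  shows "distinct K" "set K = G ` {1..r+1} \<union> X ` {1..i-1}" "length K = r + i"
    "0 < f i" "f i - 1 \<le> length K"
    "\<And>a. a \<in> set K \<Longrightarrow> idx H a < idx H (X i) \<longleftrightarrow> idx K a < f i - 1"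
    "\<And>a. a \<in> set K \<Longrightarrow> idx H (X i) < idx H a \<longleftrightarrow> f i - 1 \<le> idx K a"
proof -
  have Fi: "\<forall>j\<in>{1..i-1}. f j \<le> j + r + 1"
    using F i by auto
  show "distinct K" "set K = G ` {1..r+1} \<union> X ` {1..i-1}" "length K = r + i"
    using height_stage_items[OF Fi] i unfolding K_def by auto
  show "0 < f i" "f i - 1 \<le> length K"
    using bspec[OF F i] \<open>length K = r + i\<close> by auto
  obtain k where k: "i = Suc k"
    using i by (cases i) auto
  have step: "height_stage r f i = insert_at (f i - 1) (X i) K"
    unfolding K_def k by (simp add: height_stage_Suc)
  have new: "X i \<notin> set K"
    using \<open>set K = _\<close> by auto
  fix a assume a: "a \<in> set K"
  have F': "\<forall>i\<in>{1..m}. f i \<le> i + r + 1"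
    using F by auto
  have mem: "a \<in> set (height_stage r f i)" "X i \<in> set (height_stage r f i)"
    using a by (simp_all add: step)
  have "idx H a < idx H (X i) \<longleftrightarrow> idx (height_stage r f i) a < idx (height_stage r f i) (X i)"
    "idx H (X i) < idx H a \<longleftrightarrow> idx (height_stage r f i) (X i) < idx (height_stage r f i) a"
    unfolding H_def using i height_stage_order_stable[OF F' _ mem(1) mem(2)]
      height_stage_order_stable[OF F' _ mem(2) mem(1)] by auto
  then show "idx H a < idx H (X i) \<longleftrightarrow> idx K a < f i - 1"
    "idx H (X i) < idx H a \<longleftrightarrow> f i - 1 \<le> idx K a"
    unfolding step using idx_insert_at_new[OF new \<open>f i - 1 \<le> length K\<close>]
      idx_insert_at_old[OF new \<open>f i - 1 \<le> length K\<close> a] by auto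
qed

section \<open>When an inserted element is a record\<close>

lemma left_max_above_top_green_iff:
  assumes F: "\<forall>i\<in>{1..m}. 0 < f i \<and> f i \<le> i + r + 1" and i: "i \<in> {1..m}"
  defines "H \<equiv> height_stage r f m"
  shows "idx H (G 1) < idx H (X i) \<and>
      (\<forall>l. 1 \<le> l \<and> l < i \<longrightarrow> idx H (G 1) < idx H (X l) \<longrightarrow> idx H (X l) < idx H (X i))
    \<longleftrightarrow> f i = i + r + 1"
proof -
  define K where "K = height_stage r f (i - 1)"
  note S = insertion_step[OF F i, folded K_def H_def]
  have HK: "X l \<in> set K" if "1 \<le> l" "l < i" for l
    using S(2) that by auto
  show ?thesis
  proof
    assume on_top: "f i = i + r + 1"
    have "idx H a < idx H (X i)" if "a \<in> set K" for a
      using S(6)[OF that] idx_less_length[OF that] S(3) on_top by auto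
    then show "idx H (G 1) < idx H (X i) \<and>
      (\<forall>l. 1 \<le> l \<and> l < i \<longrightarrow> idx H (G 1) < idx H (X l) \<longrightarrow> idx H (X l) < idx H (X i))"
      using S(2) HK by auto
  next
    assume rec: "idx H (G 1) < idx H (X i) \<and>
      (\<forall>l. 1 \<le> l \<and> l < i \<longrightarrow> idx H (G 1) < idx H (X l) \<longrightarrow> idx H (X l) < idx H (X i))"
    show "f i = i + r + 1"
    proof (rule ccontr)
      assume "f i \<noteq> i + r + 1"
      then have p: "f i - 1 < length K"
        using F i S(3) by fastforce
      \<comment> \<open>the item directly above \<open>x\<^sub>i\<close> at time \<open>i\<close>\<close>
      define y where "y = K ! (f i - 1)"
      have y: "y \<in> set K"
        unfolding y_def using p by simp
      have above: "idx H (X i) < idx H y"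
        using S(7)[OF y] idx_nth[OF S(1) p] unfolding y_def by simp
      from y S(2) consider j where "j \<in> {1..r+1}" "y = G j" | l where "l \<in> {1..i-1}" "y = X l"
        by auto
      then show False
      proof cases
        case 1
        then show False
          using green_heights_bounded(1)[of m f r j] F rec above unfolding H_def by fastforce
      next
        case 2
        then show False
          using rec above i by force
      qed
    qed
  qed
qed

lemma left_min_below_bottom_green_iff:
  assumes F: "\<forall>i\<in>{1..m}. 0 < f i \<and> f i \<le> i + r + 1" and i: "i \<in> {1..m}"
  defines "H \<equiv> height_stage r f m"
  shows "idx H (X i) < idx H (G (r+1)) \<and>
      (\<forall>l. 1 \<le> l \<and> l < i \<longrightarrow> idx H (X l) < idx H (G (r+1)) \<longrightarrow> idx H (X i) < idx H (X l))
    \<longleftrightarrow> f i = 1"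
proof -
  define K where "K = height_stage r f (i - 1)"
  note S = insertion_step[OF F i, folded K_def H_def]
  have HK: "X l \<in> set K" if "1 \<le> l" "l < i" for l
    using S(2) that by auto
  show ?thesis
  proof
    assume on_bottom: "f i = 1"
    have "idx H (X i) < idx H a" if "a \<in> set K" for a
      using S(7)[OF that] on_bottom by auto
    then show "idx H (X i) < idx H (G (r+1)) \<and>
      (\<forall>l. 1 \<le> l \<and> l < i \<longrightarrow> idx H (X l) < idx H (G (r+1)) \<longrightarrow> idx H (X i) < idx H (X l))"
      using S(2) HK by auto
  next
    assume rec: "idx H (X i) < idx H (G (r+1)) \<and>
      (\<forall>l. 1 \<le> l \<and> l < i \<longrightarrow> idx H (X l) < idx H (G (r+1)) \<longrightarrow> idx H (X i) < idx H (X l))"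
    show "f i = 1"
    proof (rule ccontr)
      assume "f i \<noteq> 1"
      then have p: "f i - 2 < length K" and q: "f i - 2 < f i - 1"
        using S(4,5) by auto
      \<comment> \<open>the item directly below \<open>x\<^sub>i\<close> at time \<open>i\<close>\<close>
      define y where "y = K ! (f i - 2)"
      have y: "y \<in> set K"
        unfolding y_def using p by simp
      have below: "idx H y < idx H (X i)"
        using S(6)[OF y] idx_nth[OF S(1) p] q unfolding y_def by simp
      from y S(2) consider j where "j \<in> {1..r+1}" "y = G j" | l where "l \<in> {1..i-1}" "y = X l"
        by auto
      then show False
      proof cases
        case 1
        then show False
          using green_heights_bounded(2)[of m f r j] F rec below unfolding H_def by fastforce
      next
        case 2
        then show False
          using rec below i by force
      qed
    qed
  qed
qed

section \<open>The assemblee produced by the insertion algorithm\<close>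

lemma concat_cut_blocks: "concat (cut_blocks acc P ys) = acc @ ys"
  by (induction ys arbitrary: acc) auto

lemma cut_blocks_blocks_ne: "\<forall>B\<in>set (cut_blocks acc P ys). B \<noteq> []"
  by (induction ys arbitrary: acc) auto

lemma cut_blocks_ne: "acc \<noteq> [] \<or> ys \<noteq> [] \<Longrightarrow> cut_blocks acc P ys \<noteq> []"
  by (induction ys arbitrary: acc) auto

lemma last_hd_cut_blocks: "\<exists>y\<in>set ys. P y \<Longrightarrow> last (hd (cut_blocks acc P ys)) = hd (filter P ys)"
  by (induction ys arbitrary: acc) auto

lemma last_last_cut_blocks:
  "ys \<noteq> [] \<Longrightarrow> P (last ys) \<Longrightarrow> last (last (cut_blocks acc P ys)) = last ys"
proof (induction ys arbitrary: acc)
  case (Cons y ys)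
  then show ?case
    using cut_blocks_ne[of "[]" ys P] cut_blocks_ne[of "acc @ [y]" ys P] by (cases "ys = []") auto
qed simp

lemma concat_insertion_assemblee:
  "concat (insertion_assemblee n r f w) = map (item_val n r f) w"
  unfolding insertion_assemblee_def by (simp add: map_concat[symmetric] concat_cut_blocks)

lemma item_val_eq: "item_val n r f a = idx (height_stage r f (n - r)) a + 1"
  unfolding item_val_def height_order_eq_height_stage ..

context
  fixes n r :: nat and f :: "nat \<Rightarrow> nat" and w :: "item list"
  assumes subexc: "trunc_subexc n r f" and adm: "admissible n r w"
begin

lemma subexc_bounds: "\<forall>i\<in>{1..n-r}. 0 < f i \<and> f i \<le> i + r + 1"
  using subexc unfolding trunc_subexc_def .

lemma insertion_assemblee_blocks_ne:
  "insertion_assemblee n r f w \<noteq> []" "\<forall>B\<in>set (insertion_assemblee n r f w). B \<noteq> []"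
  using adm cut_blocks_ne[of "[]" w is_G] cut_blocks_blocks_ne[of "[]" is_G w]
  unfolding insertion_assemblee_def admissible_def by auto

lemma first_end_insertion_assemblee: "first_end (insertion_assemblee n r f w) = item_val n r f (G 1)"
proof -
  have greens: "filter is_G w = map G [1..<r+2]"
    using adm unfolding admissible_def by simp
  have hd_greens: "hd (filter is_G w) = G 1"
    unfolding greens by (simp add: upt_conv_Cons del: upt_Suc)
  have "filter is_G w \<noteq> []"
    unfolding greens by simp
  then have "\<exists>y\<in>set w. is_G y"
    using hd_in_set[of "filter is_G w"] by auto
  with hd_greens show ?thesis
    using insertion_assemblee_blocks_ne cut_blocks_blocks_ne[of "[]" is_G w]
    unfolding first_end_def insertion_assemblee_def
    by (simp add: hd_map last_map last_hd_cut_blocks)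
qed

lemma last_end_insertion_assemblee:
  "last_end (insertion_assemblee n r f w) = item_val n r f (G (r+1))"
proof -
  have "w \<noteq> []" "last w = G (r+1)"
    using adm unfolding admissible_def by auto
  then show ?thesis
    using insertion_assemblee_blocks_ne cut_blocks_blocks_ne[of "[]" is_G w]
    unfolding last_end_def insertion_assemblee_def
    by (simp add: last_map last_last_cut_blocks is_G_def)
qed

lemma item_val_green_bounds:
  assumes "j \<in> {1..r+1}"
  shows "item_val n r f (G j) \<le> item_val n r f (G 1)"
    "item_val n r f (G (r+1)) \<le> item_val n r f (G j)"
  using green_heights_bounded[of "n-r" f r j] subexc_bounds assms by (auto simp: item_val_eq)

lemma inj_on_item_val_X: "inj_on (\<lambda>i. item_val n r f (X i)) {1..n-r}"
proof (rule inj_onI)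
  fix i j assume "i \<in> {1..n-r}" "j \<in> {1..n-r}" "item_val n r f (X i) = item_val n r f (X j)"
  moreover have "\<forall>i\<in>{1..n-r}. f i \<le> i + r + 1"
    using subexc_bounds by auto
  ultimately have "X i = X j"
    using height_stage_items[of "n-r" f r] idx_inj[of "X i" "height_stage r f (n-r)" "X j"]
    by (auto simp: item_val_eq)
  then show "i = j"
    by simp
qed

lemma left_records_insertion_assemblee:
  assumes "\<forall>j\<in>{1..r+1}. \<not> P (item_val n r f (G j))"
  shows "left_records R P (concat (insertion_assemblee n r f w)) =
    (\<lambda>i. item_val n r f (X i)) `
      {i\<in>{1..n-r}. P (item_val n r f (X i)) \<and> (\<forall>l. 1 \<le> l \<and> l < i \<longrightarrow>
        P (item_val n r f (X l)) \<longrightarrow> R (item_val n r f (X l)) (item_val n r f (X i)))}"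
proof -
  have "\<forall>y\<in>set w. \<not> is_X y \<longrightarrow> \<not> P (item_val n r f y)"
  proof (intro ballI impI)
    fix y assume "y \<in> set w" "\<not> is_X y"
    moreover have "is_G y"
      using \<open>\<not> is_X y\<close> by (cases y) (simp_all add: is_X_def is_G_def)
    ultimately have "y \<in> set (filter is_G w)"
      by simp
    then obtain j where "j \<in> {1..r+1}" "y = G j"
      using adm unfolding admissible_def by auto
    then show "\<not> P (item_val n r f y)"
      using assms by auto
  qed
  then have "left_records R P (map (item_val n r f) w) =
      left_records R P (map (item_val n r f) (filter is_X w))"
    by (simp add: left_records_map_filter)
  also have "map (item_val n r f) (filter is_X w) = map (\<lambda>i. item_val n r f (X i)) [1..<n-r+1]"
    using adm unfolding admissible_def by simp
  finally show ?thesis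
    unfolding concat_insertion_assemblee left_records_map_upt .
qed

lemma insertion_assemblee_ends_ordered:
  "last_end (insertion_assemblee n r f w) \<le> first_end (insertion_assemblee n r f w)"
  using item_val_green_bounds(1)[of "r+1"]
  by (simp add: first_end_insertion_assemblee last_end_insertion_assemblee)

lemma lrs_rho_insertion_assemblee:
  "lrs (rho (insertion_assemblee n r f w)) =
    (\<lambda>i. item_val n r f (X i)) ` {i\<in>{1..n-r}. f i = i + r + 1}"
proof -
  let ?v = "item_val n r f"
  have "lrs (rho (insertion_assemblee n r f w)) =
      left_records (<) (\<lambda>x. ?v (G 1) < x) (concat (insertion_assemblee n r f w))"
    using lrs_rho[OF insertion_assemblee_blocks_ne insertion_assemblee_ends_ordered]
    by (simp add: first_end_insertion_assemblee)
  also have "\<dots> = (\<lambda>i. ?v (X i)) ` {i\<in>{1..n-r}. ?v (G 1) < ?v (X i) \<and>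
      (\<forall>l. 1 \<le> l \<and> l < i \<longrightarrow> ?v (G 1) < ?v (X l) \<longrightarrow> ?v (X l) < ?v (X i))}"
    using item_val_green_bounds(1) by (intro left_records_insertion_assemblee) (simp add: not_less)
  also have "{i\<in>{1..n-r}. ?v (G 1) < ?v (X i) \<and>
      (\<forall>l. 1 \<le> l \<and> l < i \<longrightarrow> ?v (G 1) < ?v (X l) \<longrightarrow> ?v (X l) < ?v (X i))} =
      {i\<in>{1..n-r}. f i = i + r + 1}"
    using left_max_above_top_green_iff[OF subexc_bounds] by (auto simp: item_val_eq)
  finally show ?thesis .
qed

lemma rls_rho_insertion_assemblee:
  "rls (rho (insertion_assemblee n r f w)) =
    (\<lambda>i. item_val n r f (G (r+1)) - item_val n r f (X i)) ` {i\<in>{1..n-r}. f i = 1}"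
proof -
  let ?v = "item_val n r f"
  let ?b = "?v (G (r+1))"
  have "0 \<notin> set (concat (insertion_assemblee n r f w))"
    by (auto simp: concat_insertion_assemblee item_val_def)
  then have "rls (rho (insertion_assemblee n r f w)) =
      (\<lambda>x. ?b - x) ` left_records (>) (\<lambda>x. x < ?b) (concat (insertion_assemblee n r f w))"
    using rls_rho[OF insertion_assemblee_blocks_ne insertion_assemblee_ends_ordered]
    by (simp add: last_end_insertion_assemblee)
  also have "left_records (>) (\<lambda>x. x < ?b) (concat (insertion_assemblee n r f w)) =
      (\<lambda>i. ?v (X i)) ` {i\<in>{1..n-r}. ?v (X i) < ?b \<and>
      (\<forall>l. 1 \<le> l \<and> l < i \<longrightarrow> ?v (X l) < ?b \<longrightarrow> ?v (X i) < ?v (X l))}"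
    using item_val_green_bounds(2) by (intro left_records_insertion_assemblee) (simp add: not_less)
  also have "{i\<in>{1..n-r}. ?v (X i) < ?b \<and>
      (\<forall>l. 1 \<le> l \<and> l < i \<longrightarrow> ?v (X l) < ?b \<longrightarrow> ?v (X i) < ?v (X l))} =
      {i\<in>{1..n-r}. f i = 1}"
    using left_min_below_bottom_green_iff[OF subexc_bounds] by (auto simp: item_val_eq)
  finally show ?thesis
    by (simp add: image_image)
qed

lemma inj_on_rls_values:
  "inj_on (\<lambda>i. item_val n r f (G (r+1)) - item_val n r f (X i)) {i\<in>{1..n-r}. f i = 1}"
proof (rule inj_onI)
  fix i j assume i: "i \<in> {i\<in>{1..n-r}. f i = 1}" and j: "j \<in> {i\<in>{1..n-r}. f i = 1}"
    and eq: "item_val n r f (G (r+1)) - item_val n r f (X i) =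
      item_val n r f (G (r+1)) - item_val n r f (X j)"
  have "item_val n r f (X i) < item_val n r f (G (r+1))" "item_val n r f (X j) < item_val n r f (G (r+1))"
    using left_min_below_bottom_green_iff[OF subexc_bounds] i j by (auto simp: item_val_eq)
  with eq have "item_val n r f (X i) = item_val n r f (X j)"
    by linarith
  with inj_on_item_val_X i j show "i = j"
    by (auto dest: inj_onD)
qed

end

theorem mainTheorem2:
  fixes n r :: nat and f :: "nat \<Rightarrow> nat" and w :: "item list"
  assumes "r \<le> n"
    and "trunc_subexc n r f"
    and "admissible n r w"
  shows "card (lrs (rho (insertion_assemblee n r f w))) = card {i\<in>{1..n-r}. f i = i + r + 1}
       \<and> card (rls (rho (insertion_assemblee n r f w))) = card {i\<in>{1..n-r}. f i = 1}"
proof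
  show "card (lrs (rho (insertion_assemblee n r f w))) = card {i\<in>{1..n-r}. f i = i + r + 1}"
    unfolding lrs_rho_insertion_assemblee[OF assms(2,3)]
    by (rule card_image, rule inj_on_subset[OF inj_on_item_val_X[OF assms(2,3)]]) auto
  show "card (rls (rho (insertion_assemblee n r f w))) = card {i\<in>{1..n-r}. f i = 1}"
    unfolding rls_rho_insertion_assemblee[OF assms(2,3)]
    using card_image[OF inj_on_rls_values[OF assms(2,3)]] .
qed

end
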